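(* Let $\phi:K\to\mathbb R$ be a convex function that attains its minimum value at $0$. Then for all $x,y\in K$ with $|x|\le|y|$ we have $\phi(x)\le\phi(y)$.
   Context: $K$ is a field complete with respect to a non-trivial non-archimedean absolute value, $B_K=\{x\in K:|x|\le1\}$. A function $\phi:E\to\mathbb R$ on a $K$-vector space $E$ is convex if for all $n$, $x_1,\dots,x_n\in E$ and $\lambda_1,\dots,\lambda_n\in B_K$ with $\sum\lambda_i=1$ one has $\phi(\sum\lambda_ix_i)\le\max_i|\lambda_i|\phi(x_i)$. *)

theory Defs
  imports Complex_Main
begin

definition nonarch_absval :: "('k::field \<Rightarrow> real) \<Rightarrow> bool" where
  "nonarch_absval av \<longleftrightarrow>
     (\<forall>x. 0 \<le> av x) \<and> (\<forall>x. av x = 0 \<longleftrightarrow> x = 0) \<and>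
     (\<forall>x y. av (x * y) = av x * av y) \<and>
     (\<forall>x y. av (x + y) \<le> max (av x) (av y))"

definition nontrivial_absval :: "('k::field \<Rightarrow> real) \<Rightarrow> bool" where
  "nontrivial_absval av \<longleftrightarrow> (\<exists>x. x \<noteq> 0 \<and> av x \<noteq> 1)"

definition complete_absval :: "('k::field \<Rightarrow> real) \<Rightarrow> bool" where
  "complete_absval av \<longleftrightarrow>
     (\<forall>s :: nat \<Rightarrow> 'k.
        (\<forall>e>0. \<exists>N. \<forall>m\<ge>N. \<forall>n\<ge>N. av (s m - s n) < e) \<longrightarrow>
        (\<exists>l. \<forall>e>0. \<exists>N. \<forall>n\<ge>N. av (s n - l) < e))"

text \<open>Convexity of phi : E \<rightarrow> R, for E = K viewed as a K-vector space
  (scalar multiplication = field multiplication).\<close>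
definition convex_fun :: "('k::field \<Rightarrow> real) \<Rightarrow> ('k \<Rightarrow> real) \<Rightarrow> bool" where
  "convex_fun av phi \<longleftrightarrow>
     (\<forall>(n::nat) (x::nat \<Rightarrow> 'k) (lam::nat \<Rightarrow> 'k).
        (\<forall>i<n. av (lam i) \<le> 1) \<and> (\<Sum>i<n. lam i) = 1 \<longrightarrow>
        phi (\<Sum>i<n. lam i * x i) \<le> Max ((\<lambda>i. av (lam i) * phi (x i)) ` {..<n}))"

end

theory Submission
  imports Defs
begin

text \<open>Write \<open>x = l * y\<close> with \<open>|l| \<le> 1\<close>. The ultrametric inequality lets us present \<open>x\<close> as a
  combination of \<open>y\<close>, \<open>y\<close> and \<open>0\<close> whose three weights all have absolute value exactly 1:
  \<open>x = l*y + 1*0 + (-l)*0\<close> if \<open>|l| = 1\<close>, and \<open>x = 1*y + (l-1)*y + (1-l)*0\<close> if \<open>|l| < 1\<close>,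
  because then \<open>|1 - l| = 1\<close>. For unit weights convexity reads
  \<open>\<phi>(x) \<le> max (\<phi> y) (\<phi> 0) = \<phi> y\<close>.\<close>

lemma nonarch_absvalD:
  assumes "nonarch_absval av"
  shows "0 \<le> av x" "av x = 0 \<longleftrightarrow> x = 0" "av (x * y) = av x * av y"
    "av (x + y) \<le> max (av x) (av y)"
  using assms unfolding nonarch_absval_def by auto

lemma nonarch_absval_one:
  assumes "nonarch_absval av"
  shows "av 1 = 1"
proof -
  have "av 1 = av 1 * av 1" using nonarch_absvalD(3)[OF assms, of 1 1] by simp
  moreover have "av 1 \<noteq> 0" using nonarch_absvalD(2)[OF assms] by simp
  ultimately show ?thesis by simp
qed

lemma nonarch_absval_minus:
  assumes "nonarch_absval av"
  shows "av (- x) = av x"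
proof -
  have "av (-1) * av (-1) = 1"
    using nonarch_absvalD(3)[OF assms, of "-1" "-1"] nonarch_absval_one[OF assms] by simp
  then have "av (-1) = 1"
    using nonarch_absvalD(1)[OF assms, of "-1"]
    by (metis abs_of_nonneg abs_square_eq_1 power2_eq_square)
  then show ?thesis using nonarch_absvalD(3)[OF assms, of "-1" x] by simp
qed

lemma nonarch_absval_add_eq_left:
  assumes "nonarch_absval av" "av y < av x"
  shows "av (x + y) = av x"
proof -
  have "av (x + y) \<le> max (av x) (av y)" using nonarch_absvalD(4)[OF assms(1)] .
  moreover have "av x \<le> max (av (x + y)) (av y)"
    using nonarch_absvalD(4)[OF assms(1), of "x + y" "- y"] nonarch_absval_minus[OF assms(1), of y]
    by simp
  ultimately show ?thesis using assms(2) by linarith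
qed

lemma nonarch_absval_divide_le_one:
  assumes "nonarch_absval av" "av x \<le> av y"
  shows "av (x / y) \<le> 1"
proof (cases "y = 0")
  case True
  then show ?thesis using nonarch_absvalD(2)[OF assms(1), of 0] by simp
next
  case False
  then have "av y > 0" using nonarch_absvalD(1,2)[OF assms(1), of y] by fastforce
  moreover have "av x = av (x / y) * av y"
    using nonarch_absvalD(3)[OF assms(1), of "x / y" y] False by simp
  ultimately show ?thesis using assms(2) by (simp add: mult_le_cancel_right2)
qed

lemma convex_fun_unit_weights3:
  assumes "convex_fun av phi" "av a = 1" "av b = 1" "av c = 1" "a + b + c = 1"
  shows "phi (a * p + b * q + c * r) \<le> max (phi p) (max (phi q) (phi r))"
proof -
  define lam where "lam = (!) [a, b, c]"
  define xs where "xs = (!) [p, q, r]"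
  have three: "{..<3::nat} = {0, 1, 2}" by auto
  have "(\<forall>i<3. av (lam i) \<le> 1) \<and> (\<Sum>i<3. lam i) = 1"
    using assms(2-5) by (auto simp: lam_def three less_Suc_eq numeral_3_eq_3 add.assoc)
  then have "phi (\<Sum>i<3. lam i * xs i) \<le> Max ((\<lambda>i. av (lam i) * phi (xs i)) ` {..<3})"
    using assms(1) unfolding convex_fun_def by blast
  then show ?thesis
    using assms(2-4) by (simp add: lam_def xs_def three add.assoc max.assoc)
qed

lemma convex_fun_scale_le:
  assumes "nonarch_absval av" "convex_fun av phi" "\<forall>z. phi 0 \<le> phi z" "av l \<le> 1"
  shows "phi (l * y) \<le> phi y"
proof -
  have one: "av 1 = 1" using nonarch_absval_one[OF assms(1)] .
  consider "av l = 1" | "av l < 1" using assms(4) by linarith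
  then have "phi (l * y) \<le> max (phi y) (phi 0)"
  proof cases
    case 1
    have "av (- l) = 1" using 1 nonarch_absval_minus[OF assms(1)] by simp
    from convex_fun_unit_weights3[OF assms(2) 1 one this, of y 0 0]
    show ?thesis by simp
  next
    case 2
    have "av (1 - l) = 1"
      using nonarch_absval_add_eq_left[OF assms(1), of "- l" 1] 2 one
        nonarch_absval_minus[OF assms(1), of l] by simp
    moreover have "av (l - 1) = 1"
      using calculation nonarch_absval_minus[OF assms(1), of "1 - l"] by simp
    moreover have "1 + (l - 1) + (1 - l) = 1" by simp
    ultimately have "phi (1 * y + (l - 1) * y + (1 - l) * 0) \<le> max (phi y) (max (phi y) (phi 0))"
      using convex_fun_unit_weights3[OF assms(2) one] by blast
    moreover have "1 * y + (l - 1) * y + (1 - l) * 0 = l * y" by (simp add: algebra_simps)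
    ultimately show ?thesis by simp
  qed
  then show ?thesis using assms(3) by simp
qed

theorem mainTheorem5:
  fixes av :: "'k::field \<Rightarrow> real" and phi :: "'k \<Rightarrow> real" and x y :: "'k"
  assumes "nonarch_absval av" and "nontrivial_absval av" and "complete_absval av"
    and "convex_fun av phi"
    and "\<forall>z. phi 0 \<le> phi z"
    and "av x \<le> av y"
  shows "phi x \<le> phi y"
proof -
  have "x = (x / y) * y"
  proof (cases "y = 0")
    case True
    then have "av x \<le> 0" using assms(6) nonarch_absvalD(2)[OF assms(1), of 0] by simp
    then have "x = 0" using nonarch_absvalD(1,2)[OF assms(1), of x] by linarith
    then show ?thesis by simp
  qed simp
  moreover have "phi ((x / y) * y) \<le> phi y"
    using convex_fun_scale_le[OF assms(1,4,5) nonarch_absval_divide_le_one[OF assms(1,6)]] .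
  ultimately show ?thesis by simp
qed

end
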